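(* Let $\mathcal{A}$ be an alphabet with $d\ge3$ letters, $B\in\mathcal{A}$, $\mathcal{A}'=\mathcal{A}\setminus\{B\}$, let $\pi$ be an irreducible permutation on $\mathcal{A}$, and let $\pi'$ be obtained from $\pi$ by removing $B$ from the top and bottom rows; assume $\pi'$ is irreducible. Then either $g(\pi)=g(\pi')$ or $g(\pi)=g(\pi')+1$. Moreover, the following are equivalent: (1) $g(\pi)=g(\pi')$; (2) $H(\pi)$ is spanned by $\{\Omega(\pi)e_x: x\in\mathcal{A}'\}$; (3) $e_B\notin H(\pi)$; (4) $e_B$ does not belong to the span of $\{\Omega(\pi)e_x: x\in\mathcal{A}'\}$; (5) the natural projection $P:\mathbb{R}^{\mathcal{A}}\to\mathbb{R}^{\mathcal{A}'}$ restricts to a symplectic isomorphism $(H(\pi),\omega_\pi)\to(H(\pi'),\omega_{\pi'})$.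
   Context: A permutation on $\mathcal{A}$ is a pair $\pi=(\pi_0,\pi_1)$ of bijections $\mathcal{A}\to\{1,\dots,\#\mathcal{A}\}$ (top and bottom rows); irreducible means no $1\le k<\#\mathcal{A}$ with $\pi_0^{-1}(\{1,\dots,k\})=\pi_1^{-1}(\{1,\dots,k\})$. $\Omega(\pi)$ is the operator on $\mathbb{R}^{\mathcal{A}}$ (canonical basis $e_x$) with $\langle\Omega(\pi)e_x,e_y\rangle=1$ if $\pi_0(x)>\pi_0(y),\pi_1(x)<\pi_1(y)$; $-1$ if $\pi_0(x)<\pi_0(y),\pi_1(x)>\pi_1(y)$; $0$ otherwise. $H(\pi)=\Omega(\pi)\mathbb{R}^{\mathcal{A}}$, $2g(\pi)=\dim H(\pi)$, and $\omega_\pi(\Omega(\pi)u,\Omega(\pi)v)=\langle u,\Omega(\pi)v\rangle$ is a symplectic form on $H(\pi)$; similarly for $\pi'$ on $\mathbb{R}^{\mathcal{A}'}$. *)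

theory Defs
  imports "HOL-Analysis.Analysis"
begin

text \<open>The alphabet is modelled as a finite type 'a (the alphabet is UNIV),
  and a sub-alphabet by a carrier set S.  The space R^S is modelled as the coordinate
  subspace of real^'a of vectors vanishing outside S.  A permutation on S is a pair
  (p0,p1) of maps 'a => nat which are bijections S -> {1..card S} (values outside S
  are irrelevant).\<close>

definition is_perm_on :: "'a set \<Rightarrow> ('a \<Rightarrow> nat) \<times> ('a \<Rightarrow> nat) \<Rightarrow> bool" where
  "is_perm_on S p \<longleftrightarrow> bij_betw (fst p) S {1..card S} \<and> bij_betw (snd p) S {1..card S}"

definition irreducible_perm :: "'a set \<Rightarrow> ('a \<Rightarrow> nat) \<times> ('a \<Rightarrow> nat) \<Rightarrow> bool" where
  "irreducible_perm S p \<longleftrightarrow> is_perm_on S p \<and>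
     \<not> (\<exists>k. 1 \<le> k \<and> k < card S \<and>
           {x\<in>S. fst p x \<in> {1..k}} = {x\<in>S. snd p x \<in> {1..k}})"

definition remove_row :: "('a \<Rightarrow> nat) \<Rightarrow> 'a \<Rightarrow> ('a \<Rightarrow> nat)" where
  "remove_row r B = (\<lambda>x. if r x < r B then r x else r x - 1)"

definition remove_letter :: "('a \<Rightarrow> nat) \<times> ('a \<Rightarrow> nat) \<Rightarrow> 'a \<Rightarrow> ('a \<Rightarrow> nat) \<times> ('a \<Rightarrow> nat)" where
  "remove_letter p B = (remove_row (fst p) B, remove_row (snd p) B)"

definition omega_entry :: "('a \<Rightarrow> nat) \<times> ('a \<Rightarrow> nat) \<Rightarrow> 'a \<Rightarrow> 'a \<Rightarrow> real" where
  "omega_entry p x y =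
     (if fst p x > fst p y \<and> snd p x < snd p y then 1
      else if fst p x < fst p y \<and> snd p x > snd p y then -1 else 0)"

definition vecs :: "'a::finite set \<Rightarrow> (real^'a) set" where
  "vecs S = {v. \<forall>x. x \<notin> S \<longrightarrow> v $ x = 0}"

definition Omega :: "'a::finite set \<Rightarrow> ('a \<Rightarrow> nat) \<times> ('a \<Rightarrow> nat) \<Rightarrow> real^'a \<Rightarrow> real^'a" where
  "Omega S p v = (\<chi> y. if y \<in> S then (\<Sum>x\<in>S. v $ x * omega_entry p x y) else 0)"

definition Hsp :: "'a::finite set \<Rightarrow> ('a \<Rightarrow> nat) \<times> ('a \<Rightarrow> nat) \<Rightarrow> (real^'a) set" where
  "Hsp S p = Omega S p ` vecs S"

definition genus :: "'a::finite set \<Rightarrow> ('a \<Rightarrow> nat) \<times> ('a \<Rightarrow> nat) \<Rightarrow> real" where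
  "genus S p = real (dim (Hsp S p)) / 2"

text \<open>omega_p(Omega u, Omega v) = <u, Omega v>.\<close>
definition omega_form :: "'a::finite set \<Rightarrow> ('a \<Rightarrow> nat) \<times> ('a \<Rightarrow> nat) \<Rightarrow> real^'a \<Rightarrow> real^'a \<Rightarrow> real" where
  "omega_form S p h1 h2 = (SOME u. u \<in> vecs S \<and> Omega S p u = h1) \<bullet> h2"

definition proj :: "'a::finite \<Rightarrow> real^'a \<Rightarrow> real^'a" where
  "proj B v = (\<chi> x. if x = B then 0 else v $ x)"

end

theory Submission
  imports Defs
begin

text \<open>Omega(pi) is skew-adjoint and H(pi) is its range. Let K be the hyperplane orthogonal to e_B
  and R = Omega(pi) K = span {Omega(pi) e_x | x \<noteq> B}; then H(pi) = R + span {Omega(pi) e_B}.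
  Removing B does not change omega_entry on the remaining letters, so Omega(pi') u is the
  projection of Omega(pi) u for u \<in> K, i.e. H(pi') = P R. Skewness gives a dichotomy:
  exactly one of Omega(pi) e_B \<in> R and e_B \<in> R holds. If e_B \<in> R, then R is a hyperplane
  of H(pi) and P kills the line spanned by e_B \<in> R, so the dimension drops by 2. Otherwise
  H(pi) = R, P is injective on it, and P preserves the form, because
  omega_pi(Omega(pi) u, h) = \<langle>u, h\<rangle> does not see the B-coordinate of h when u \<in> K.\<close>

lemma orthogonal_hyperplane_imp_parallel:
  fixes v e :: "'v::real_inner"
  assumes "\<And>u. u \<bullet> e = 0 \<Longrightarrow> v \<bullet> u = 0"
  shows "v = (v \<bullet> e / (e \<bullet> e)) *\<^sub>R e"
proof -
  define w where "w = v - (v \<bullet> e / (e \<bullet> e)) *\<^sub>R e"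
  have "w \<bullet> e = 0"
    by (cases "e = 0") (simp_all add: w_def inner_diff_left)
  then have "w \<bullet> w = v \<bullet> w - (v \<bullet> e / (e \<bullet> e)) * (e \<bullet> w)"
    by (simp add: w_def inner_diff_left inner_commute)
  also have "\<dots> = 0"
    using assms[OF \<open>w \<bullet> e = 0\<close>] \<open>w \<bullet> e = 0\<close> by (simp add: inner_commute)
  finally show ?thesis
    by (simp add: w_def)
qed

lemma range_eq_span_insert_hyperplane_image:
  fixes f :: "'v::real_inner \<Rightarrow> 'w::real_vector"
  assumes "linear f"
  shows "range f = span (insert (f e) (f ` {v. v \<bullet> e = 0}))"
proof
  show "range f \<subseteq> span (insert (f e) (f ` {v. v \<bullet> e = 0}))"
  proof
    fix y assume "y \<in> range f"
    then obtain v where "y = f v"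
      by blast
    define t where "t = v \<bullet> e / (e \<bullet> e)"
    have "(v - t *\<^sub>R e) \<bullet> e = 0"
      by (cases "e = 0") (simp_all add: t_def inner_diff_left)
    then have "f (v - t *\<^sub>R e) + t *\<^sub>R f e \<in> span (insert (f e) (f ` {v. v \<bullet> e = 0}))"
      by (intro span_add span_scale span_base) auto
    then show "y \<in> span (insert (f e) (f ` {v. v \<bullet> e = 0}))"
      using assms by (simp add: \<open>y = f v\<close> linear_diff linear_scale)
  qed
  show "span (insert (f e) (f ` {v. v \<bullet> e = 0})) \<subseteq> range f"
    by (intro span_minimal) (auto intro: linear_subspace_image[OF assms subspace_UNIV])
qed

lemma skew_normal_in_hyperplane_image_imp:
  fixes f :: "'v::real_inner \<Rightarrow> 'v"
  assumes skew: "\<And>u w. f u \<bullet> w = - (u \<bullet> f w)"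
    and "e \<noteq> 0" and "e \<in> f ` {v. v \<bullet> e = 0}"
  shows "f e \<notin> f ` {v. v \<bullet> e = 0}"
proof
  assume "f e \<in> f ` {v. v \<bullet> e = 0}"
  then obtain w where w: "w \<bullet> e = 0" "f e = f w"
    by auto
  obtain u where u: "e = f u"
    using assms(3) by auto
  have "e \<bullet> e = - (u \<bullet> f e)"
    using skew[of u e] u by simp
  also have "\<dots> = f u \<bullet> w"
    using skew[of u w] w(2) by simp
  also have "\<dots> = 0"
    using u w(1) by (simp add: inner_commute)
  finally show False
    using \<open>e \<noteq> 0\<close> by simp
qed

lemma skew_normal_notin_hyperplane_image_imp:
  fixes f :: "'v::euclidean_space \<Rightarrow> 'v"
  assumes "linear f" and skew: "\<And>u w. f u \<bullet> w = - (u \<bullet> f w)"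
    and fe: "f e \<notin> f ` {v. v \<bullet> e = 0}"
  shows "e \<in> f ` {v. v \<bullet> e = 0}"
proof -
  define R where "R = f ` {v. v \<bullet> e = 0}"
  have "subspace R"
    unfolding R_def by (intro linear_subspace_image[OF assms(1)] subspace_hyperplane2)
  then have span_R: "span R = R"
    by simp
  then have "span R \<subset> span (insert (f e) R)"
    using fe by (metis R_def span_base insertI1 span_mono subset_insertI psubsetI)
  then obtain z where z: "z \<noteq> 0" "z \<in> span (insert (f e) R)"
      and z_orth: "\<And>y. y \<in> R \<Longrightarrow> z \<bullet> y = 0"
    by (rule orthogonal_to_subspace_exists_gen) (auto simp: orthogonal_def span_base)
  obtain k where "z - k *\<^sub>R f e \<in> R"
    using z(2) span_breakdown_eq span_R by blast
  then have "z \<bullet> z = k * (z \<bullet> f e)"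
    using z_orth[of "z - k *\<^sub>R f e"] by (simp add: inner_diff_right)
  then have z_fe: "z \<bullet> f e \<noteq> 0"
    using z(1) by auto
  \<comment> \<open>z \<bottom> R forces f z \<in> span {e}; as z \<bottom> f z by skewness, this forces z \<bottom> e, so e \<in> R\<close>
  have "f z \<bullet> u = 0" if "u \<bullet> e = 0" for u
    using skew[of z u] z_orth[of "f u"] that by (simp add: R_def)
  define c where "c = f z \<bullet> e / (e \<bullet> e)"
  have fz: "f z = c *\<^sub>R e"
    unfolding c_def by (rule orthogonal_hyperplane_imp_parallel) fact
  have "f z \<bullet> e = - (z \<bullet> f e)"
    by (rule skew)
  then have "c \<noteq> 0"
    using fz z_fe by auto
  have "f z \<bullet> z = 0"
    using skew[of z z] by (simp add: inner_commute)
  then have "z \<bullet> e = 0"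
    using fz \<open>c \<noteq> 0\<close> by (simp add: inner_commute)
  then have "(1 / c) *\<^sub>R f z \<in> R"
    using \<open>subspace R\<close> by (intro subspace_scale) (auto simp: R_def)
  then show ?thesis
    using fz \<open>c \<noteq> 0\<close> by (simp add: R_def)
qed

lemma skew_hyperplane_image_dichotomy:
  fixes f :: "'v::euclidean_space \<Rightarrow> 'v"
  assumes "linear f" and "\<And>u w. f u \<bullet> w = - (u \<bullet> f w)" and "e \<noteq> 0"
  shows "f e \<in> f ` {v. v \<bullet> e = 0} \<longleftrightarrow> e \<notin> f ` {v. v \<bullet> e = 0}"
  using skew_normal_in_hyperplane_image_imp[OF assms(2,3)]
    skew_normal_notin_hyperplane_image_imp[OF assms(1,2)] by blast

lemma linear_proj: "linear (proj B)"
  by (rule linearI) (auto simp: vec_eq_iff proj_def)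

lemma proj_eq_diff_axis: "proj B v = v - (v $ B) *\<^sub>R axis B 1"
  by (simp add: vec_eq_iff proj_def axis_def)

lemma proj_nth_self: "proj B v $ B = 0"
  by (simp add: proj_def)

lemma inj_on_proj_iff:
  assumes "subspace V"
  shows "inj_on (proj B) V \<longleftrightarrow> axis B 1 \<notin> V"
proof -
  have "v = 0" if "axis B 1 \<notin> V" "v \<in> V" "proj B v = 0" for v
  proof (rule ccontr)
    assume "v \<noteq> 0"
    have v: "v = (v $ B) *\<^sub>R axis B 1"
      using \<open>proj B v = 0\<close> by (simp add: proj_eq_diff_axis)
    with \<open>v \<noteq> 0\<close> have "v $ B \<noteq> 0"
      by auto
    then have "axis B 1 = (1 / v $ B) *\<^sub>R v"
      by (subst (2) v) simp
    also have "\<dots> \<in> V"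
      using assms \<open>v \<in> V\<close> by (rule subspace_scale)
    finally show False
      using \<open>axis B 1 \<notin> V\<close> by simp
  qed
  moreover have "proj B (axis B 1) = 0" "axis B 1 \<noteq> (0 :: real^'a)"
    by (simp_all add: proj_eq_diff_axis)
  ultimately show ?thesis
    unfolding linear_inj_on_iff_eq_0[OF linear_proj assms] by blast
qed

lemma dim_proj_image:
  assumes "subspace V" and "axis B 1 \<in> V"
  shows "dim V = dim (proj B ` V) + 1"
proof -
  have proj_V: "proj B ` V \<subseteq> V"
    using assms by (auto simp: proj_eq_diff_axis intro: subspace_diff subspace_scale)
  have "V \<subseteq> span (insert (axis B 1) (proj B ` V))"
  proof
    fix v assume "v \<in> V"
    then have "proj B v + (v $ B) *\<^sub>R axis B 1 \<in> span (insert (axis B 1) (proj B ` V))"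
      by (intro span_add span_scale span_base) auto
    then show "v \<in> span (insert (axis B 1) (proj B ` V))"
      by (simp add: proj_eq_diff_axis)
  qed
  then have V_eq: "V = span (insert (axis B 1) (proj B ` V))"
    using assms proj_V span_minimal[of "insert (axis B 1) (proj B ` V)" V] by blast
  have notin: "axis B 1 \<notin> span (proj B ` V)"
  proof -
    have "span (proj B ` V) = proj B ` V"
      using linear_subspace_image[OF linear_proj assms(1)] by (simp only: span_eq_iff)
    moreover have "axis B 1 \<noteq> proj B v" for v :: "real^'a"
      using proj_nth_self[of B v] by (metis axis_nth zero_neq_one)
    ultimately show ?thesis
      by (metis imageE)
  qed
  have "dim V = dim (insert (axis B 1) (proj B ` V))"
    using V_eq dim_span by metis
  also have "\<dots> = dim (proj B ` V) + 1"
    using notin by (simp add: dim_insert)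
  finally show ?thesis .
qed

lemma omega_entry_swap: "omega_entry p y x = - omega_entry p x y"
  by (auto simp: omega_entry_def)

lemma Omega_nth: "Omega S p v $ y = (if y \<in> S then (\<Sum>x\<in>S. v $ x * omega_entry p x y) else 0)"
  by (simp add: Omega_def)

lemma linear_Omega: "linear (Omega S p)"
  by (rule linearI) (auto simp: vec_eq_iff Omega_nth sum.distrib sum_distrib_left algebra_simps)

lemma inner_Omega: "Omega S p u \<bullet> w = (\<Sum>x\<in>S. \<Sum>y\<in>S. u $ x * omega_entry p x y * w $ y)"
proof -
  have "Omega S p u \<bullet> w = (\<Sum>y\<in>S. (\<Sum>x\<in>S. u $ x * omega_entry p x y) * w $ y)"
    by (simp add: inner_vec_def Omega_nth if_distrib[of "\<lambda>a. a * c" for c] sum.If_cases)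
  also have "\<dots> = (\<Sum>y\<in>S. \<Sum>x\<in>S. u $ x * omega_entry p x y * w $ y)"
    by (simp add: sum_distrib_right)
  also have "\<dots> = (\<Sum>x\<in>S. \<Sum>y\<in>S. u $ x * omega_entry p x y * w $ y)"
    by (rule sum.swap)
  finally show ?thesis .
qed

lemma Omega_skew: "Omega S p u \<bullet> w = - (u \<bullet> Omega S p w)"
proof -
  have "u \<bullet> Omega S p w = (\<Sum>x\<in>S. \<Sum>y\<in>S. w $ x * omega_entry p x y * u $ y)"
    by (simp only: inner_commute[of u] inner_Omega)
  also have "\<dots> = (\<Sum>y\<in>S. \<Sum>x\<in>S. w $ x * omega_entry p x y * u $ y)"
    by (rule sum.swap)
  also have "\<dots> = - (\<Sum>y\<in>S. \<Sum>x\<in>S. u $ y * omega_entry p y x * w $ x)"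
  proof -
    have "w $ x * omega_entry p x y * u $ y = - (u $ y * omega_entry p y x * w $ x)" for x y
      using omega_entry_swap[of p x y] by simp
    then show ?thesis
      by (simp add: sum_negf)
  qed
  finally show ?thesis
    by (simp add: inner_Omega)
qed

lemma vecs_eq_span_axis: "vecs S = span {axis x 1 | x. x \<in> S}"
proof
  show "vecs S \<subseteq> span {axis x 1 | x. x \<in> S}"
  proof
    fix v assume "v \<in> vecs S"
    then have "v = (\<Sum>x\<in>S. v $ x *\<^sub>R axis x 1)"
      by (auto simp: vec_eq_iff vecs_def axis_def if_distrib sum.If_cases cong: if_cong)
    also have "\<dots> \<in> span {axis x 1 | x. x \<in> S}"
      by (intro span_sum span_scale span_base) auto
    finally show "v \<in> span {axis x 1 | x. x \<in> S}" .
  qed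
  have "subspace (vecs S)"
    by (auto simp: subspace_def vecs_def)
  then show "span {axis x 1 | x. x \<in> S} \<subseteq> vecs S"
    by (rule span_minimal[rotated]) (auto simp: vecs_def axis_def)
qed

lemma Omega_image_vecs: "Omega T p ` vecs S = span {Omega T p (axis x 1) | x. x \<in> S}"
proof -
  have "{Omega T p (axis x 1) | x. x \<in> S} = Omega T p ` {axis x 1 | x. x \<in> S}"
    by auto
  then show ?thesis
    by (simp add: vecs_eq_span_axis linear_span_image[OF linear_Omega])
qed

lemma vecs_UNIV [simp]: "vecs UNIV = UNIV"
  by (simp add: vecs_def)

lemma vecs_Diff_singleton_UNIV: "vecs (UNIV - {B}) = {v. v \<bullet> axis B 1 = 0}"
  by (auto simp: vecs_def inner_axis)

lemma remove_row_less_iff: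
  assumes "inj_on r S" "B \<in> S" "x \<in> S - {B}" "y \<in> S - {B}"
  shows "remove_row r B x < remove_row r B y \<longleftrightarrow> r x < r y"
proof -
  have "r x \<noteq> r B" "r y \<noteq> r B"
    using assms by (auto dest: inj_onD)
  then show ?thesis
    by (auto simp: remove_row_def)
qed

lemma omega_entry_remove_letter:
  assumes "inj_on (fst p) S" "inj_on (snd p) S" "B \<in> S" "x \<in> S - {B}" "y \<in> S - {B}"
  shows "omega_entry (remove_letter p B) x y = omega_entry p x y"
  using assms remove_row_less_iff[of "fst p" S B] remove_row_less_iff[of "snd p" S B]
  by (simp add: omega_entry_def remove_letter_def)

lemma Omega_remove_letter:
  assumes "inj_on (fst p) S" "inj_on (snd p) S" "B \<in> S" "u \<in> vecs (S - {B})"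
  shows "Omega (S - {B}) (remove_letter p B) u = proj B (Omega S p u)"
proof -
  have "(\<Sum>x\<in>S. u $ x * omega_entry p x y) = (\<Sum>x\<in>S - {B}. u $ x * omega_entry p x y)" for y
    using assms(3,4) by (simp add: sum.remove vecs_def)
  then show ?thesis
    using assms by (simp add: vec_eq_iff Omega_nth proj_def omega_entry_remove_letter)
qed

lemma Hsp_remove_letter:
  assumes "inj_on (fst p) S" "inj_on (snd p) S" "B \<in> S"
  shows "Hsp (S - {B}) (remove_letter p B) = proj B ` Omega S p ` vecs (S - {B})"
  using Omega_remove_letter[OF assms] by (auto simp: Hsp_def image_iff)

lemma omega_form_Omega:
  assumes "u \<in> vecs S" "h \<in> Hsp S p"
  shows "omega_form S p (Omega S p u) h = u \<bullet> h"
proof -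
  obtain w where h: "h = Omega S p w"
    using assms(2) by (auto simp: Hsp_def)
  have "\<exists>u'. u' \<in> vecs S \<and> Omega S p u' = Omega S p u"
    using assms(1) by blast
  \<comment> \<open>SOME may pick another preimage u'; skewness gives u' \<bullet> h = u \<bullet> h\<close>
  then obtain u' where "u' \<in> vecs S" "Omega S p u' = Omega S p u"
        and "omega_form S p (Omega S p u) h = u' \<bullet> h"
    unfolding omega_form_def by (metis (mono_tags, lifting) someI_ex)
  moreover have "u' \<bullet> Omega S p w = u \<bullet> Omega S p w" if "Omega S p u' = Omega S p u"
    using that Omega_skew[of S p u' w] Omega_skew[of S p u w] by simp
  ultimately show ?thesis
    using h by simp
qed

lemma Omega_image_hyperplane:
  "Omega UNIV p ` {v. v \<bullet> axis B 1 = 0} = span {Omega UNIV p (axis x 1) | x. x \<noteq> B}"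
  using Omega_image_vecs[of UNIV p "UNIV - {B}"] by (simp add: vecs_Diff_singleton_UNIV)

lemma Hsp_UNIV_eq_span_insert:
  "Hsp UNIV p = span (insert (Omega UNIV p (axis B 1)) (span {Omega UNIV p (axis x 1) | x. x \<noteq> B}))"
  using range_eq_span_insert_hyperplane_image[OF linear_Omega, of UNIV p "axis B 1"]
  by (simp add: Hsp_def Omega_image_hyperplane)

lemma Omega_axis_in_span_iff:
  "Omega UNIV p (axis B 1) \<in> span {Omega UNIV p (axis x 1) | x. x \<noteq> B}
     \<longleftrightarrow> axis B 1 \<notin> span {Omega UNIV p (axis x 1) | x. x \<noteq> B}"
  using skew_hyperplane_image_dichotomy[OF linear_Omega Omega_skew, of "axis B 1" UNIV p]
  by (simp add: Omega_image_hyperplane)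

lemma Hsp_remove_letter_UNIV:
  assumes "inj (fst p)" and "inj (snd p)"
  shows "Hsp (UNIV - {B}) (remove_letter p B) = proj B ` span {Omega UNIV p (axis x 1) | x. x \<noteq> B}"
  using Hsp_remove_letter[OF assms, of B] Omega_image_vecs[of UNIV p "UNIV - {B}"] by simp

lemma genus_remove_letter_increases:
  fixes p :: "('a::finite \<Rightarrow> nat) \<times> ('a \<Rightarrow> nat)" and B :: 'a
  assumes "inj (fst p)" and "inj (snd p)"
  defines "R \<equiv> span {Omega UNIV p (axis x 1) | x. x \<noteq> B}"
  assumes "axis B 1 \<in> R"
  shows "genus UNIV p = genus (UNIV - {B}) (remove_letter p B) + 1"
    and "Hsp UNIV p \<noteq> R" and "axis B 1 \<in> Hsp UNIV p" and "\<not> inj_on (proj B) (Hsp UNIV p)"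
proof -
  have H: "Hsp UNIV p = span (insert (Omega UNIV p (axis B 1)) R)"
    unfolding R_def by (rule Hsp_UNIV_eq_span_insert)
  have "Omega UNIV p (axis B 1) \<notin> R"
    using Omega_axis_in_span_iff[of p B] assms(4) by (simp add: R_def)
  then have "dim (Hsp UNIV p) = dim R + 1"
    by (simp add: H dim_insert R_def span_span)
  moreover have "dim R = dim (Hsp (UNIV - {B}) (remove_letter p B)) + 1"
    using dim_proj_image[of R B] assms(4) Hsp_remove_letter_UNIV[OF assms(1,2)] by (simp add: R_def)
  ultimately show "genus UNIV p = genus (UNIV - {B}) (remove_letter p B) + 1"
    by (simp add: genus_def)
  show "Hsp UNIV p \<noteq> R"
    using \<open>Omega UNIV p (axis B 1) \<notin> R\<close> by (metis H insertI1 span_base)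
  have "R \<subseteq> Hsp UNIV p"
    unfolding H using span_superset by blast
  then show "axis B 1 \<in> Hsp UNIV p"
    using assms(4) by blast
  then show "\<not> inj_on (proj B) (Hsp UNIV p)"
    using inj_on_proj_iff[of "Hsp UNIV p" B] by (simp add: H)
qed

lemma genus_remove_letter_preserved:
  fixes p :: "('a::finite \<Rightarrow> nat) \<times> ('a \<Rightarrow> nat)" and B :: 'a
  assumes inj: "inj (fst p)" "inj (snd p)"
  defines "R \<equiv> span {Omega UNIV p (axis x 1) | x. x \<noteq> B}"
  assumes "axis B 1 \<notin> R"
  shows "genus UNIV p = genus (UNIV - {B}) (remove_letter p B)"
    and "Hsp UNIV p = R"
    and "bij_betw (proj B) (Hsp UNIV p) (Hsp (UNIV - {B}) (remove_letter p B))"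
    and "\<And>h1 h2. h1 \<in> Hsp UNIV p \<Longrightarrow> h2 \<in> Hsp UNIV p \<Longrightarrow>
           omega_form (UNIV - {B}) (remove_letter p B) (proj B h1) (proj B h2) = omega_form UNIV p h1 h2"
proof -
  have "Omega UNIV p (axis B 1) \<in> R"
    using Omega_axis_in_span_iff[of p B] assms(4) by (simp add: R_def)
  then show H: "Hsp UNIV p = R"
    using Hsp_UNIV_eq_span_insert[of p B] by (simp add: R_def span_redundant span_span)
  have H': "Hsp (UNIV - {B}) (remove_letter p B) = proj B ` R"
    unfolding R_def by (rule Hsp_remove_letter_UNIV[OF inj])
  have "inj_on (proj B) R"
    using inj_on_proj_iff[of R B] assms(4) by (simp add: R_def)
  then show "bij_betw (proj B) (Hsp UNIV p) (Hsp (UNIV - {B}) (remove_letter p B))"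
    by (simp add: H H' bij_betw_def)
  have "dim (proj B ` R) = dim R"
    using dim_image_eq[OF linear_proj, of B R] \<open>inj_on (proj B) R\<close> by (simp add: R_def span_span)
  then show "genus UNIV p = genus (UNIV - {B}) (remove_letter p B)"
    by (simp add: genus_def H H')
  fix h1 h2 assume h: "h1 \<in> Hsp UNIV p" "h2 \<in> Hsp UNIV p"
  then obtain u where u: "u \<in> vecs (UNIV - {B})" "h1 = Omega UNIV p u"
    using H Omega_image_vecs[of UNIV p "UNIV - {B}"] by (auto simp: R_def)
  have "proj B h2 \<in> Hsp (UNIV - {B}) (remove_letter p B)"
    using h(2) by (simp add: H H')
  moreover have "proj B h1 = Omega (UNIV - {B}) (remove_letter p B) u"
    using Omega_remove_letter[OF inj] u by simp
  ultimately have "omega_form (UNIV - {B}) (remove_letter p B) (proj B h1) (proj B h2) = u \<bullet> proj B h2"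
    using omega_form_Omega u(1) by metis
  also have "\<dots> = u \<bullet> h2"
    using u(1) by (simp add: proj_eq_diff_axis inner_diff_right inner_axis vecs_def)
  also have "\<dots> = omega_form UNIV p h1 h2"
    using omega_form_Omega[of u UNIV h2 p] u(2) h(2) by simp
  finally show "omega_form (UNIV - {B}) (remove_letter p B) (proj B h1) (proj B h2)
      = omega_form UNIV p h1 h2" .
qed

theorem lemma5p3:
  fixes p :: "('a::finite \<Rightarrow> nat) \<times> ('a \<Rightarrow> nat)" and B :: 'a
  assumes "CARD('a) \<ge> 3"
    and "irreducible_perm UNIV p"
    and "irreducible_perm (UNIV - {B}) (remove_letter p B)"
  shows "(genus UNIV p = genus (UNIV - {B}) (remove_letter p B)
          \<or> genus UNIV p = genus (UNIV - {B}) (remove_letter p B) + 1)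
    \<and> (genus UNIV p = genus (UNIV - {B}) (remove_letter p B)
         \<longleftrightarrow> Hsp UNIV p = span {Omega UNIV p (axis x 1) | x. x \<noteq> B})
    \<and> (genus UNIV p = genus (UNIV - {B}) (remove_letter p B)
         \<longleftrightarrow> axis B 1 \<notin> Hsp UNIV p)
    \<and> (genus UNIV p = genus (UNIV - {B}) (remove_letter p B)
         \<longleftrightarrow> axis B 1 \<notin> span {Omega UNIV p (axis x 1) | x. x \<noteq> B})
    \<and> (genus UNIV p = genus (UNIV - {B}) (remove_letter p B)
         \<longleftrightarrow> (bij_betw (proj B) (Hsp UNIV p) (Hsp (UNIV - {B}) (remove_letter p B))
              \<and> (\<forall>h1\<in>Hsp UNIV p. \<forall>h2\<in>Hsp UNIV p.
                   omega_form (UNIV - {B}) (remove_letter p B) (proj B h1) (proj B h2)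
                   = omega_form UNIV p h1 h2)))"
proof -
  \<comment> \<open>only injectivity of the two rows of p is needed\<close>
  have inj: "inj (fst p)" "inj (snd p)"
    using assms(2) by (auto simp: irreducible_perm_def is_perm_on_def bij_betw_def)
  show ?thesis
  proof (cases "axis B 1 \<in> span {Omega UNIV p (axis x 1) | x. x \<noteq> B}")
    case True
    with genus_remove_letter_increases[OF inj] show ?thesis
      by (auto simp: bij_betw_def)
  next
    case False
    with genus_remove_letter_preserved[OF inj] show ?thesis
      by auto
  qed
qed

end
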